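(* For every formula $A$, the context $\psi(A)$ is irreducible and is a maximal decomposition of $A$: the sequent $\psi(A)\vdash A$ is derivable, and for every irreducible context $\Theta$ such that $\Theta\vdash A$ is derivable, $\Theta\le\psi(A)$ in the substitution order.
   Context: Formulas are built from atoms ($p,q,\dots$) by a binary product: every formula is an atom or $A\bullet B$. A context is a finite (possibly empty) list of formulas; commas denote concatenation; a context is irreducible if its leftmost formula is not a product. $\psi$ is defined inductively by $\psi(p)=p$ for atoms and $\psi(A\bullet B)=\psi(A),B$. The sequent calculus has exactly four rules (no weakening, contraction or exchange): ($\bullet L$) from $A,B,\Delta\vdash C$ infer $A\bullet B,\Delta\vdash C$ (the product must be leftmost); ($\bullet R$) from $\Gamma\vdash A$ and $\Delta\vdash B$ infer $\Gamma,\Delta\vdash A\bullet B$; ($id$) $A\vdash A$; ($cut$) from $\Theta\vdash A$ and $\Gamma,A,\Delta\vdash B$ infer $\Gamma,\Theta,\Delta\vdash B$; derivable means conclusion of a finite derivation tree with no undischarged premises. The substitution order on contexts is the least relation $\le$ such that: (1) if $\Gamma\vdash A$ is derivable then $\Gamma\le A$ (one-element context); (2) $\cdot\le\cdot$ for the empty context; (3) if $\Gamma_1\le\Gamma_2$ and $\Theta_1\le\Theta_2$ then $(\Gamma_1,\Theta_1)\le(\Gamma_2,\Theta_2)$. *)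

theory Defs
  imports Main
begin

datatype 'a fm = Atom 'a | Prod "'a fm" "'a fm"

type_synonym 'a ctx = "'a fm list"

inductive derivable :: "'a ctx \<Rightarrow> 'a fm \<Rightarrow> bool" where
  prodL: "derivable (A # B # \<Delta>) C \<Longrightarrow> derivable (Prod A B # \<Delta>) C"
| prodR: "derivable \<Gamma> A \<Longrightarrow> derivable \<Delta> B \<Longrightarrow> derivable (\<Gamma> @ \<Delta>) (Prod A B)"
| ident: "derivable [A] A"
| cut: "derivable \<Theta> A \<Longrightarrow> derivable (\<Gamma> @ [A] @ \<Delta>) B \<Longrightarrow> derivable (\<Gamma> @ \<Theta> @ \<Delta>) B"

definition irreducible :: "'a ctx \<Rightarrow> bool" where
  "irreducible \<Gamma> \<longleftrightarrow> (\<forall>A B \<Delta>. \<Gamma> \<noteq> Prod A B # \<Delta>)"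

fun psi :: "'a fm \<Rightarrow> 'a ctx" where
  "psi (Atom p) = [Atom p]"
| "psi (Prod A B) = psi A @ [B]"

inductive subst_le :: "'a ctx \<Rightarrow> 'a ctx \<Rightarrow> bool" where
  seq: "derivable \<Gamma> A \<Longrightarrow> subst_le \<Gamma> [A]"
| empty: "subst_le [] []"
| concat: "subst_le \<Gamma>1 \<Gamma>2 \<Longrightarrow> subst_le \<Theta>1 \<Theta>2 \<Longrightarrow> subst_le (\<Gamma>1 @ \<Theta>1) (\<Gamma>2 @ \<Theta>2)"

end

theory Submission
  imports Defs
begin

text \<open>By cut elimination every derivable sequent has a cut-free derivation. In a cut-free
derivation of \<open>\<Theta> \<turnstile> A \<bullet> B\<close> with \<open>\<Theta>\<close> irreducible the last rule cannot be \<open>\<bullet>L\<close>,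
so it is \<open>\<bullet>R\<close>, splitting \<open>\<Theta>\<close> as \<open>\<Gamma>, \<Delta>\<close> with \<open>\<Gamma> \<turnstile> A\<close> and \<open>\<Delta> \<turnstile> B\<close>. Here \<open>\<Gamma>\<close> is a
nonempty prefix of \<open>\<Theta>\<close>, hence irreducible, so induction on \<open>A\<close> gives \<open>\<Gamma> \<le> \<psi>(A)\<close>, and
\<open>\<Delta> \<le> B\<close> by the first rule of the order; concatenation yields \<open>\<Theta> \<le> \<psi>(A), B = \<psi>(A \<bullet> B)\<close>.\<close>

inductive cutfree :: "'a ctx \<Rightarrow> 'a fm \<Rightarrow> bool" where
  cutfree_prodL: "cutfree (A # B # \<Delta>) C \<Longrightarrow> cutfree (Prod A B # \<Delta>) C"
| cutfree_prodR: "cutfree \<Gamma> A \<Longrightarrow> cutfree \<Delta> B \<Longrightarrow> cutfree (\<Gamma> @ \<Delta>) (Prod A B)"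
| cutfree_atom: "cutfree [Atom p] (Atom p)"

lemma cutfree_imp_derivable: "cutfree \<Gamma> C \<Longrightarrow> derivable \<Gamma> C"
  by (induction rule: cutfree.induct) (auto intro: derivable.intros)

lemma cutfree_ident: "cutfree [A] A"
proof (induction A)
  case (Atom p)
  show ?case by (rule cutfree_atom)
next
  case (Prod A B)
  then have "cutfree ([A] @ [B]) (Prod A B)" by (rule cutfree_prodR)
  then show ?case by (simp add: cutfree_prodL)
qed

lemma cutfree_not_Nil: "cutfree \<Gamma> C \<Longrightarrow> \<Gamma> \<noteq> []"
  by (induction rule: cutfree.induct) auto

lemma append_eq_append_Cons_cases:
  assumes "xs @ ys = zs @ a # ws"
  obtains us where "xs = zs @ a # us" and "ws = us @ ys"
    | us where "zs = xs @ us" and "ys = us @ a # ws"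
proof -
  obtain us where "xs = zs @ us \<and> us @ ys = a # ws \<or> xs @ us = zs \<and> ys = us @ a # ws"
    using assms by (auto simp: append_eq_append_conv2)
  then show thesis
    by (metis that append.right_neutral append_Cons append_Nil list.exhaust list.inject)
qed

text \<open>The principal case of cut elimination: both premises introduce the cut formula
\<open>X \<bullet> Y\<close>, and the cut is replaced by cuts on \<open>X\<close> and \<open>Y\<close>.\<close>

lemma cutfree_cut_principal:
  assumes cut_X: "\<And>\<Theta> \<Gamma> \<Delta> B. cutfree \<Theta> X \<Longrightarrow> cutfree (\<Gamma> @ X # \<Delta>) B \<Longrightarrow> cutfree (\<Gamma> @ \<Theta> @ \<Delta>) B"
    and cut_Y: "\<And>\<Theta> \<Gamma> \<Delta> B. cutfree \<Theta> Y \<Longrightarrow> cutfree (\<Gamma> @ Y # \<Delta>) B \<Longrightarrow> cutfree (\<Gamma> @ \<Theta> @ \<Delta>) B"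
    and "cutfree \<Theta> (Prod X Y)" and "cutfree (X # Y # \<Delta>) B"
  shows "cutfree (\<Theta> @ \<Delta>) B"
  using assms(3,4)
proof (induction \<Theta> "Prod X Y" arbitrary: \<Delta> rule: cutfree.induct)
  case (cutfree_prodL P Q \<Theta>)
  then show ?case by (simp add: cutfree.cutfree_prodL)
next
  case (cutfree_prodR \<Gamma>1 \<Gamma>2)
  have "cutfree ([] @ \<Gamma>1 @ Y # \<Delta>) B"
    using cut_X[of \<Gamma>1 "[]" "Y # \<Delta>"] cutfree_prodR by simp
  then have "cutfree (\<Gamma>1 @ \<Gamma>2 @ \<Delta>) B"
    using cut_Y[of \<Gamma>2 \<Gamma>1 \<Delta>] cutfree_prodR by simp
  then show ?case by simp
qed

text \<open>The commutative cases: induction on the derivation of the right premise, reducing to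
the principal case once the cut formula becomes the leftmost product decomposed by \<open>\<bullet>L\<close>.\<close>

lemma cutfree_cut_right:
  assumes principal: "\<And>X Y \<Delta> B. A = Prod X Y \<Longrightarrow> cutfree (X # Y # \<Delta>) B \<Longrightarrow> cutfree (\<Theta> @ \<Delta>) B"
    and "cutfree \<Theta> A" and "cutfree (\<Gamma> @ A # \<Delta>) B"
  shows "cutfree (\<Gamma> @ \<Theta> @ \<Delta>) B"
  using assms(3)
proof (induction "\<Gamma> @ A # \<Delta>" B arbitrary: \<Gamma> \<Delta> rule: cutfree.induct)
  case (cutfree_prodL P Q D C)
  show ?case
  proof (cases \<Gamma>)
    case Nil
    with cutfree_prodL show ?thesis by (auto intro: principal)
  next
    case (Cons G \<Gamma>')
    with cutfree_prodL.hyps(3) have "\<Gamma> = Prod P Q # \<Gamma>'" and "D = \<Gamma>' @ A # \<Delta>" by auto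
    with cutfree_prodL.hyps(2)[of "P # Q # \<Gamma>'"] show ?thesis
      by (simp add: cutfree.cutfree_prodL)
  qed
next
  case (cutfree_prodR \<Gamma>1 B1 \<Gamma>2 B2)
  from \<open>\<Gamma>1 @ \<Gamma>2 = \<Gamma> @ A # \<Delta>\<close> show ?case
  proof (cases rule: append_eq_append_Cons_cases)
    case (1 us)
    with cutfree_prodR.hyps(2)[of \<Gamma> us] have "cutfree (\<Gamma> @ \<Theta> @ us) B1" by simp
    from this cutfree_prodR.hyps(3)
    have "cutfree ((\<Gamma> @ \<Theta> @ us) @ \<Gamma>2) (Prod B1 B2)" by (rule cutfree.cutfree_prodR)
    with 1 show ?thesis by simp
  next
    case (2 us)
    with cutfree_prodR.hyps(4)[of us \<Delta>] have "cutfree (us @ \<Theta> @ \<Delta>) B2" by simp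
    with cutfree_prodR.hyps(1)
    have "cutfree (\<Gamma>1 @ us @ \<Theta> @ \<Delta>) (Prod B1 B2)" by (rule cutfree.cutfree_prodR)
    with 2 show ?thesis by simp
  qed
next
  case (cutfree_atom p)
  with \<open>cutfree \<Theta> A\<close> show ?case by (cases \<Gamma>) auto
qed

lemma cutfree_cut:
  "cutfree \<Theta> A \<Longrightarrow> cutfree (\<Gamma> @ A # \<Delta>) B \<Longrightarrow> cutfree (\<Gamma> @ \<Theta> @ \<Delta>) B"
proof (induction A arbitrary: \<Theta> \<Gamma> \<Delta> B)
  case (Atom p)
  then show ?case by (auto intro: cutfree_cut_right)
next
  case (Prod X Y)
  have principal: "cutfree (\<Theta> @ \<Delta>') B'" if "cutfree (X # Y # \<Delta>') B'" for \<Delta>' B'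
    using Prod.IH Prod.prems(1) that by (rule cutfree_cut_principal)
  from Prod.prems show ?case
    by (rule cutfree_cut_right[rotated]) (simp add: principal)
qed

lemma derivable_imp_cutfree: "derivable \<Gamma> C \<Longrightarrow> cutfree \<Gamma> C"
  by (induction rule: derivable.induct)
    (auto intro: cutfree.intros cutfree_ident cutfree_cut)

lemma irreducible_psi: "irreducible (psi A)"
proof -
  have "\<exists>p \<Gamma>. psi A = Atom p # \<Gamma>" by (induction A) auto
  then show ?thesis by (auto simp: irreducible_def)
qed

lemma derivable_psi: "derivable (psi A) A"
  by (induction A) (auto intro: derivable.intros)

lemma cutfree_irreducible_subst_le_psi:
  "irreducible \<Theta> \<Longrightarrow> cutfree \<Theta> A \<Longrightarrow> subst_le \<Theta> (psi A)"
proof (induction A arbitrary: \<Theta>)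
  case (Atom p)
  then show ?case by (simp add: seq cutfree_imp_derivable)
next
  case (Prod A B)
  from \<open>cutfree \<Theta> (Prod A B)\<close> show ?case
  proof (cases rule: cutfree.cases)
    case (cutfree_prodL A' B' \<Delta>)
    with \<open>irreducible \<Theta>\<close> show ?thesis by (simp add: irreducible_def)
  next
    case (cutfree_prodR \<Gamma> \<Delta>)
    have "irreducible \<Gamma>"
      using \<open>irreducible \<Theta>\<close> cutfree_prodR(1) cutfree_not_Nil[OF cutfree_prodR(2)]
      by (cases \<Gamma>) (auto simp: irreducible_def)
    with Prod.IH(1) cutfree_prodR(2) have "subst_le \<Gamma> (psi A)" by blast
    moreover have "subst_le \<Delta> [B]"
      using cutfree_prodR(3) by (simp add: seq cutfree_imp_derivable)
    ultimately have "subst_le (\<Gamma> @ \<Delta>) (psi A @ [B])" by (rule concat)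
    with cutfree_prodR(1) show ?thesis by simp
  qed
qed

theorem proposition2p5:
  fixes A :: "'a fm"
  shows "irreducible (psi A) \<and> derivable (psi A) A \<and>
         (\<forall>\<Theta>. irreducible \<Theta> \<and> derivable \<Theta> A \<longrightarrow> subst_le \<Theta> (psi A))"
  using irreducible_psi derivable_psi
    cutfree_irreducible_subst_le_psi derivable_imp_cutfree by blast

end
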